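(* Assume the setting described in the context. Consider Algorithm 2 with a deterministic rule for choosing $f$ in each inner iteration, and let $s\ge1$. Then: (a) for every $\tau\in\mathrm{BadPar}(s)$ the longest chain of $\tau$ has length exactly $s$; (b) the set $\mathrm{BadPar}(s)$ is valid.
   Context: Setting: $\Omega$ is a finite set and $F$ a finite set of flaws, each a nonempty subset of $\Omega$; $F_\sigma=\{f:\sigma\in f\}$. For $\sigma\in\Omega$ and $f\in F_\sigma$ there is a probability distribution $\rho(\cdot\mid f,\sigma)$ with support $A(f,\sigma)$. A walk is $\sigma_1\xrightarrow{w_1}\sigma_2\cdots\xrightarrow{w_t}\sigma_{t+1}$ with $w_i\in F_{\sigma_i}$ and $\sigma_{i+1}\in A(w_i,\sigma_i)$, with word $w_1\ldots w_t$. $\sim$ is a symmetric relation on $F$ (loops allowed), with $\Gamma(f)=\{g:f\sim g\}$, $\Gamma^+(f)=\Gamma(f)\cup\{f\}$ and $\Gamma^+(S)=\bigcup_{f\in S}\Gamma^+(f)$. It is assumed that for every step $\sigma\xrightarrow{f}\sigma'$, $F_{\sigma'}\subseteq(F_\sigma\setminus\{f\})\cup\Gamma(f)$. Write $f\cong g$ if $f\sim g$ or $f=g$. Algorithm 2 (with initial distribution $\omega^{\mathrm{init}}$). Sample $\sigma$ from $\omega^{\mathrm{init}}$. While $F_\sigma\neq\varnothing$, perform a round: $I:=\varnothing$; while $F_\sigma\setminus\Gamma^+(I)\ne\varnothing$, pick $f\in F_\sigma\setminus\Gamma^+(I)$ by the deterministic rule, sample $\sigma'$ from $\rho(\cdot\mid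 f,\sigma)$, set $\sigma\leftarrow\sigma'$ and $I\leftarrow I\cup\{f\}$. $\mathrm{BadPar}(s)$: for each execution (with positive probability) having at least $s$ rounds, take the walk consisting of all steps of the first $s-1$ rounds followed by the first step of round $s$. $\mathrm{BadPar}(s)$ is the set of all such walks. A chain of a walk with word $w_1\ldots w_t$ is a subsequence $u_1\ldots u_m$ of $w_1\ldots w_t$ with $u_i\cong u_{i+1}$ for $i\in[m-1]$; its length is $m$. A deterministic strategy assigns to each walk whose last state $\sigma$ is flawed a flaw in $F_\sigma$; a walk follows it if each $w_i$ is the flaw assigned to the prefix ending at $\sigma_i$. A set of walks is valid if all its walks follow one common deterministic strategy and no walk in it is a proper prefix (a different initial segment) of another walk in it. *)

theory Defs
  imports "HOL-Probability.Probability_Mass_Function" "HOL-Library.Sublist"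
begin

text \<open>A walk is represented by its initial state and the list of its steps
  (flaw addressed, resulting state).\<close>
type_synonym 's walk = "'s \<times> ('s set \<times> 's) list"

definition flawsAt :: "'s set set \<Rightarrow> 's \<Rightarrow> 's set set" where
  "flawsAt F \<sigma> = {f \<in> F. \<sigma> \<in> f}"

definition Gam :: "'s set set \<Rightarrow> ('s set \<Rightarrow> 's set \<Rightarrow> bool) \<Rightarrow> 's set \<Rightarrow> 's set set" where
  "Gam F sim f = {g \<in> F. sim f g}"

definition GamP :: "'s set set \<Rightarrow> ('s set \<Rightarrow> 's set \<Rightarrow> bool) \<Rightarrow> 's set \<Rightarrow> 's set set" where
  "GamP F sim f = Gam F sim f \<union> {f}"

definition GamPS :: "'s set set \<Rightarrow> ('s set \<Rightarrow> 's set \<Rightarrow> bool) \<Rightarrow> 's set set \<Rightarrow> 's set set" where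
  "GamPS F sim S = (\<Union>f\<in>S. GamP F sim f)"

definition wstates :: "'s walk \<Rightarrow> 's list" where
  "wstates \<tau> = fst \<tau> # map snd (snd \<tau>)"

definition wlast :: "'s walk \<Rightarrow> 's" where
  "wlast \<tau> = last (wstates \<tau>)"

definition word :: "'s walk \<Rightarrow> 's set list" where
  "word \<tau> = map fst (snd \<tau>)"

definition is_walk :: "'s set set \<Rightarrow> ('s set \<Rightarrow> 's \<Rightarrow> 's pmf) \<Rightarrow> 's walk \<Rightarrow> bool" where
  "is_walk F \<rho> \<tau> = (\<forall>i < length (snd \<tau>).
      fst (snd \<tau> ! i) \<in> flawsAt F (wstates \<tau> ! i) \<and>
      snd (snd \<tau> ! i) \<in> set_pmf (\<rho> (fst (snd \<tau> ! i)) (wstates \<tau> ! i)))"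

text \<open>Reachable (positive-probability) partial executions of Algorithm 2:
  \<open>alg2_reach \<dots> h I k j\<close> means that the execution can produce the walk \<open>h\<close>,
  with current inner set \<open>I\<close>, \<open>k\<close> rounds started so far, and \<open>j\<close> steps
  performed in the current (k-th) round.  The deterministic rule may depend on the
  whole history \<open>h\<close> and on \<open>I\<close>.\<close>
inductive alg2_reach ::
  "'s set set \<Rightarrow> ('s set \<Rightarrow> 's set \<Rightarrow> bool) \<Rightarrow> ('s set \<Rightarrow> 's \<Rightarrow> 's pmf) \<Rightarrow> 's pmf
   \<Rightarrow> ('s walk \<Rightarrow> 's set set \<Rightarrow> 's set) \<Rightarrow> 's walk \<Rightarrow> 's set set \<Rightarrow> nat \<Rightarrow> nat \<Rightarrow> bool"
  for F sim \<rho> \<omega> rule where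
  init: "\<sigma> \<in> set_pmf \<omega> \<Longrightarrow> alg2_reach F sim \<rho> \<omega> rule (\<sigma>, []) {} 0 0"
| cont: "alg2_reach F sim \<rho> \<omega> rule h I k j \<Longrightarrow> I \<noteq> {} \<Longrightarrow>
         flawsAt F (wlast h) - GamPS F sim I \<noteq> {} \<Longrightarrow> f = rule h I \<Longrightarrow>
         \<sigma>' \<in> set_pmf (\<rho> f (wlast h)) \<Longrightarrow>
         alg2_reach F sim \<rho> \<omega> rule (fst h, snd h @ [(f, \<sigma>')]) (I \<union> {f}) k (Suc j)"
| new: "alg2_reach F sim \<rho> \<omega> rule h I k j \<Longrightarrow>
        (I = {} \<or> flawsAt F (wlast h) - GamPS F sim I = {}) \<Longrightarrow>
        flawsAt F (wlast h) \<noteq> {} \<Longrightarrow> f = rule h {} \<Longrightarrow>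
        \<sigma>' \<in> set_pmf (\<rho> f (wlast h)) \<Longrightarrow>
        alg2_reach F sim \<rho> \<omega> rule (fst h, snd h @ [(f, \<sigma>')]) {f} (Suc k) 1"

definition BadPar ::
  "'s set set \<Rightarrow> ('s set \<Rightarrow> 's set \<Rightarrow> bool) \<Rightarrow> ('s set \<Rightarrow> 's \<Rightarrow> 's pmf) \<Rightarrow> 's pmf
   \<Rightarrow> ('s walk \<Rightarrow> 's set set \<Rightarrow> 's set) \<Rightarrow> nat \<Rightarrow> 's walk set" where
  "BadPar F sim \<rho> \<omega> rule s = {h. \<exists>I. alg2_reach F sim \<rho> \<omega> rule h I s 1}"

definition is_chain :: "('s set \<Rightarrow> 's set \<Rightarrow> bool) \<Rightarrow> 's set list \<Rightarrow> 's set list \<Rightarrow> bool" where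
  "is_chain sim us ws = (subseq us ws \<and> successively (\<lambda>f g. sim f g \<or> f = g) us)"

definition longest_chain :: "('s set \<Rightarrow> 's set \<Rightarrow> bool) \<Rightarrow> 's set list \<Rightarrow> nat" where
  "longest_chain sim ws = Max (length ` {us. is_chain sim us ws})"

definition det_strategy :: "'s set set \<Rightarrow> ('s set \<Rightarrow> 's \<Rightarrow> 's pmf) \<Rightarrow> ('s walk \<Rightarrow> 's set) \<Rightarrow> bool" where
  "det_strategy F \<rho> S = (\<forall>\<tau>. is_walk F \<rho> \<tau> \<longrightarrow> flawsAt F (wlast \<tau>) \<noteq> {} \<longrightarrow>
      S \<tau> \<in> flawsAt F (wlast \<tau>))"

definition follows :: "('s walk \<Rightarrow> 's set) \<Rightarrow> 's walk \<Rightarrow> bool" where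
  "follows S \<tau> = (\<forall>i < length (snd \<tau>). fst (snd \<tau> ! i) = S (fst \<tau>, take i (snd \<tau>)))"

definition proper_prefix :: "'s walk \<Rightarrow> 's walk \<Rightarrow> bool" where
  "proper_prefix \<tau> \<tau>' = (fst \<tau> = fst \<tau>' \<and> strict_prefix (snd \<tau>) (snd \<tau>'))"

definition valid :: "'s set set \<Rightarrow> ('s set \<Rightarrow> 's \<Rightarrow> 's pmf) \<Rightarrow> 's walk set \<Rightarrow> bool" where
  "valid F \<rho> W = ((\<exists>S. det_strategy F \<rho> S \<and> (\<forall>\<tau>\<in>W. follows S \<tau>)) \<and>
                  (\<forall>\<tau>\<in>W. \<forall>\<tau>'\<in>W. \<not> proper_prefix \<tau> \<tau>'))"

end

theory Submission
  imports Defs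
begin

text \<open>An inductive invariant of Algorithm 2 does the work for (a). After the first steps of
  round \<open>k\<close>, every chain of the word has length at most \<open>k\<close>, the chains of length \<open>k\<close> end
  exactly at the flaws of the current set \<open>I\<close>, and every flaw still eligible in round \<open>k\<close>
  ends a chain of length \<open>k\<close> once appended to the word. An eligible flaw lies outside
  \<open>\<Gamma>\<^sup>+(I)\<close>, so addressing it cannot lengthen a chain; when a round ends, every present flaw
  lies in \<open>\<Gamma>\<^sup>+(I)\<close>, so the first flaw of the next round extends a chain of length \<open>k\<close>.

  For (b), the algorithm itself is the deterministic strategy: its state (\<open>I\<close>, round, step)
  is a function of the history, and the pair (round, step) strictly increases along an
  execution, whereas all walks of \<open>BadPar(s)\<close> stop at step 1 of round \<open>s\<close>.\<close>

lemma word_snoc [simp]: "word (a, xs @ [(f, \<sigma>)]) = word (a, xs) @ [f]"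
  by (simp add: word_def)

lemma wlast_snoc [simp]: "wlast (a, xs @ [(f, \<sigma>)]) = \<sigma>"
  by (simp add: wlast_def wstates_def)

lemma GamPS_empty [simp]: "GamPS F sim {} = {}"
  by (simp add: GamPS_def)

lemma GamPS_insert: "GamPS F sim (insert f I) = insert f (Gam F sim f \<union> GamPS F sim I)"
  by (auto simp: GamPS_def GamP_def)

lemma is_chain_snocE:
  assumes "is_chain sim us (ws @ [x])"
  obtains "is_chain sim us ws"
    | us' where "us = us' @ [x]" "is_chain sim us' ws" "us' \<noteq> [] \<Longrightarrow> sim (last us') x \<or> last us' = x"
proof -
  from assms have "subseq us (ws @ [x])" and succ: "successively (\<lambda>f g. sim f g \<or> f = g) us"
    by (auto simp: is_chain_def)
  then obtain a b where ab: "us = a @ b" "subseq a ws" "subseq b [x]"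
    by (blast elim: subseq_appendE)
  have "b = [] \<or> b = [x]"
    using ab(3) by (cases b) (auto simp: list_emb_Cons_iff2 split: if_splits)
  then show thesis
    using that ab succ by (auto simp: is_chain_def successively_append_iff)
qed

definition ends_chain :: "('s set \<Rightarrow> 's set \<Rightarrow> bool) \<Rightarrow> 's set list \<Rightarrow> nat \<Rightarrow> 's set \<Rightarrow> bool" where
  "ends_chain sim ws k g \<longleftrightarrow> (\<exists>us. is_chain sim us ws \<and> length us = k \<and> us \<noteq> [] \<and> last us = g)"

lemma ends_chain_mono: "ends_chain sim ws k g \<Longrightarrow> subseq ws ws' \<Longrightarrow> ends_chain sim ws' k g"
  by (auto simp: ends_chain_def is_chain_def intro: subseq_order.trans)

lemma ends_chain_snoc:
  assumes "ends_chain sim ws k g" and "sim g x \<or> g = x"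
  shows "ends_chain sim (ws @ [x]) (Suc k) x"
proof -
  from assms(1) obtain us where "is_chain sim us ws" "length us = k" "us \<noteq> []" "last us = g"
    by (auto simp: ends_chain_def)
  with assms(2) have "is_chain sim (us @ [x]) (ws @ [x])"
    by (auto simp: is_chain_def successively_append_iff)
  with \<open>length us = k\<close> show ?thesis
    unfolding ends_chain_def by (intro exI[of _ "us @ [x]"]) auto
qed

lemma ends_chain_one_snoc: "ends_chain sim (ws @ [x]) 1 x"
  unfolding ends_chain_def is_chain_def by (intro exI[of _ "[x]"]) auto

lemma ends_chain_snocD: "ends_chain sim (ws @ [x]) k g \<Longrightarrow> ends_chain sim ws k g \<or> g = x"
  unfolding ends_chain_def by (metis is_chain_snocE last_snoc)

lemma ends_chain_GamPS:
  assumes "\<forall>g\<in>I. ends_chain sim ws k g" and "x \<in> GamPS F sim I"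
  shows "ends_chain sim (ws @ vs @ [x]) (Suc k) x"
proof -
  from assms(2) obtain g where "g \<in> I" "sim g x \<or> g = x"
    by (auto simp: GamPS_def GamP_def Gam_def)
  moreover from \<open>g \<in> I\<close> assms(1) have "ends_chain sim (ws @ vs) k g"
    by (auto intro: ends_chain_mono)
  ultimately show ?thesis
    using ends_chain_snoc by fastforce
qed

text \<open>The state of Algorithm 2 after some steps of round \<open>k\<close>: \<open>ws\<close> is the word of the walk so
  far, \<open>\<sigma>\<close> its last state and \<open>I\<close> the set of flaws addressed in round \<open>k\<close>.\<close>
definition round_invariant ::
  "'s set set \<Rightarrow> ('s set \<Rightarrow> 's set \<Rightarrow> bool) \<Rightarrow> 's set list \<Rightarrow> 's \<Rightarrow> 's set set \<Rightarrow> nat \<Rightarrow> bool" where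
  "round_invariant F sim ws \<sigma> I k \<longleftrightarrow>
     (I = {} \<longleftrightarrow> k = 0) \<and>
     (\<forall>us. is_chain sim us ws \<longrightarrow> length us \<le> k) \<and>
     I = {g. ends_chain sim ws k g} \<and>
     (k \<noteq> 0 \<longrightarrow> (\<forall>x \<in> flawsAt F \<sigma> - GamPS F sim I. ends_chain sim (ws @ [x]) k x))"

lemma round_invariant_init: "round_invariant F sim [] \<sigma> {} 0"
  by (auto simp: round_invariant_def ends_chain_def is_chain_def)

lemma round_invariant_continue:
  assumes inv: "round_invariant F sim ws \<sigma> I k" and "I \<noteq> {}"
    and f: "f \<in> flawsAt F \<sigma> - GamPS F sim I"
    and step: "flawsAt F \<sigma>' \<subseteq> (flawsAt F \<sigma> - {f}) \<union> Gam F sim f"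
  shows "round_invariant F sim (ws @ [f]) \<sigma>' (I \<union> {f}) k"
proof -
  from inv \<open>I \<noteq> {}\<close> have "k \<noteq> 0" and bound: "\<And>us. is_chain sim us ws \<Longrightarrow> length us \<le> k"
    and I: "I = {g. ends_chain sim ws k g}"
    and eligible: "\<And>x. x \<in> flawsAt F \<sigma> - GamPS F sim I \<Longrightarrow> ends_chain sim (ws @ [x]) k x"
    unfolding round_invariant_def by auto
  have bound': "length us \<le> k" if "is_chain sim us (ws @ [f])" for us
    using that
  proof (cases rule: is_chain_snocE)
    case (2 us')
    have "length us' \<noteq> k"
    proof
      assume "length us' = k"
      with \<open>k \<noteq> 0\<close> 2 have "last us' \<in> I" "us' \<noteq> []"
        by (auto simp: I ends_chain_def)
      with 2(3) f have "f \<in> GamPS F sim I"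
        by (auto simp: GamPS_def GamP_def Gam_def flawsAt_def)
      with f show False
        by blast
    qed
    with 2 bound show ?thesis by fastforce
  qed (rule bound)
  have ends: "I \<union> {f} = {g. ends_chain sim (ws @ [f]) k g}"
    using eligible[OF f] ends_chain_snocD[of sim ws f k] I
    by (auto intro: ends_chain_mono)
  have eligible': "ends_chain sim ((ws @ [f]) @ [x]) k x"
    if "x \<in> flawsAt F \<sigma>' - GamPS F sim (I \<union> {f})" for x
  proof -
    from that step have "x \<in> flawsAt F \<sigma> - GamPS F sim I"
      by (auto simp: GamPS_insert)
    then show ?thesis
      using eligible by (fastforce intro: ends_chain_mono list_emb_append_mono)
  qed
  show ?thesis
    unfolding round_invariant_def using bound' ends eligible' \<open>k \<noteq> 0\<close> by blast
qed

lemma round_invariant_new_round: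
  assumes inv: "round_invariant F sim ws \<sigma> I k"
    and closed: "k \<noteq> 0 \<Longrightarrow> flawsAt F \<sigma> \<subseteq> GamPS F sim I"
    and f: "f \<in> flawsAt F \<sigma>"
    and step: "flawsAt F \<sigma>' \<subseteq> (flawsAt F \<sigma> - {f}) \<union> Gam F sim f"
  shows "round_invariant F sim (ws @ [f]) \<sigma>' {f} (Suc k)"
proof -
  from inv have bound: "\<And>us. is_chain sim us ws \<Longrightarrow> length us \<le> k"
    and I: "I = {g. ends_chain sim ws k g}"
    unfolding round_invariant_def by auto
  have present: "ends_chain sim (ws @ vs @ [y]) (Suc k) y" if "y \<in> flawsAt F \<sigma>" for y vs
  proof (cases "k = 0")
    case True
    then show ?thesis
      using ends_chain_one_snoc[of sim "ws @ vs" y] by simp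
  next
    case False
    with closed that I show ?thesis
      by (blast intro: ends_chain_GamPS)
  qed
  have bound': "length us \<le> Suc k" if "is_chain sim us (ws @ [f])" for us
    using that by (cases rule: is_chain_snocE) (auto dest: bound)
  have "\<not> ends_chain sim ws (Suc k) g" for g
    using bound by (fastforce simp: ends_chain_def)
  then have ends: "{f} = {g. ends_chain sim (ws @ [f]) (Suc k) g}"
    using present[OF f, of "[]"] by (auto dest: ends_chain_snocD)
  have eligible': "ends_chain sim ((ws @ [f]) @ [x]) (Suc k) x"
    if "x \<in> flawsAt F \<sigma>' - GamPS F sim {f}" for x
  proof -
    from that step have "x \<in> flawsAt F \<sigma>"
      by (auto simp: GamPS_insert)
    then show ?thesis
      using present[of x "[f]"] by simp
  qed
  show ?thesis
    unfolding round_invariant_def using bound' ends eligible' by blast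
qed

lemma alg2_reach_round_invariant:
  assumes step: "\<forall>\<sigma> f \<sigma>'. f \<in> flawsAt F \<sigma> \<longrightarrow> \<sigma>' \<in> set_pmf (\<rho> f \<sigma>) \<longrightarrow>
                 flawsAt F \<sigma>' \<subseteq> (flawsAt F \<sigma> - {f}) \<union> Gam F sim f"
    and rule_ok: "\<forall>h I. flawsAt F (wlast h) - GamPS F sim I \<noteq> {} \<longrightarrow>
                 rule h I \<in> flawsAt F (wlast h) - GamPS F sim I"
    and reach: "alg2_reach F sim \<rho> \<omega> rule h I k j"
  shows "round_invariant F sim (word h) (wlast h) I k"
  using reach
proof induction
  case (init \<sigma>)
  show ?case
    by (simp add: word_def round_invariant_init)
next
  case (cont h I k j f \<sigma>')
  then have f: "f \<in> flawsAt F (wlast h) - GamPS F sim I"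
    using rule_ok by blast
  with cont.hyps(5) step have "flawsAt F \<sigma>' \<subseteq> (flawsAt F (wlast h) - {f}) \<union> Gam F sim f"
    by blast
  from round_invariant_continue[OF cont.IH cont.hyps(2) f this] show ?case
    by simp
next
  case (new h I k j f \<sigma>')
  then have f: "f \<in> flawsAt F (wlast h)"
    using rule_ok[rule_format, of h "{}"] by simp
  with new.hyps(5) step have "flawsAt F \<sigma>' \<subseteq> (flawsAt F (wlast h) - {f}) \<union> Gam F sim f"
    by blast
  moreover have "flawsAt F (wlast h) \<subseteq> GamPS F sim I" if "k \<noteq> 0"
    using new.hyps(2) new.IH that by (auto simp: round_invariant_def)
  ultimately show ?case
    using round_invariant_new_round[OF new.IH _ f] by simp
qed

lemma longest_chain_eqI:
  assumes "\<forall>us. is_chain sim us ws \<longrightarrow> length us \<le> k" and "is_chain sim us ws" "length us = k"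
  shows "longest_chain sim ws = k"
proof -
  have "length ` {us. is_chain sim us ws} \<subseteq> {..length ws}"
    by (auto simp: is_chain_def dest: list_emb_length)
  then have "finite (length ` {us. is_chain sim us ws})"
    by (rule finite_subset) simp
  with assms show ?thesis
    unfolding longest_chain_def by (intro Max_eqI) auto
qed

lemma BadPar_longest_chain:
  assumes step: "\<forall>\<sigma> f \<sigma>'. f \<in> flawsAt F \<sigma> \<longrightarrow> \<sigma>' \<in> set_pmf (\<rho> f \<sigma>) \<longrightarrow>
                 flawsAt F \<sigma>' \<subseteq> (flawsAt F \<sigma> - {f}) \<union> Gam F sim f"
    and rule_ok: "\<forall>h I. flawsAt F (wlast h) - GamPS F sim I \<noteq> {} \<longrightarrow>
                 rule h I \<in> flawsAt F (wlast h) - GamPS F sim I"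
    and "s \<ge> 1" and "\<tau> \<in> BadPar F sim \<rho> \<omega> rule s"
  shows "longest_chain sim (word \<tau>) = s"
proof -
  from assms(4) obtain I where "alg2_reach F sim \<rho> \<omega> rule \<tau> I s 1"
    by (auto simp: BadPar_def)
  from alg2_reach_round_invariant[OF step rule_ok this]
  have inv: "round_invariant F sim (word \<tau>) (wlast \<tau>) I s" .
  with \<open>s \<ge> 1\<close> obtain g where "ends_chain sim (word \<tau>) s g"
    by (auto simp: round_invariant_def)
  with inv show ?thesis
    by (auto simp: round_invariant_def ends_chain_def intro: longest_chain_eqI)
qed

definition alg2_next ::
  "'s set set \<Rightarrow> ('s set \<Rightarrow> 's set \<Rightarrow> bool) \<Rightarrow> ('s walk \<Rightarrow> 's set set \<Rightarrow> 's set) \<Rightarrow> 's walk \<Rightarrow> 's set set \<Rightarrow> 's set" where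
  "alg2_next F sim rule h I =
     (if I \<noteq> {} \<and> flawsAt F (wlast h) - GamPS F sim I \<noteq> {} then rule h I else rule h {})"

lemma alg2_next_in_flawsAt:
  assumes rule_ok: "\<forall>h I. flawsAt F (wlast h) - GamPS F sim I \<noteq> {} \<longrightarrow>
                 rule h I \<in> flawsAt F (wlast h) - GamPS F sim I"
    and "flawsAt F (wlast h) \<noteq> {}"
  shows "alg2_next F sim rule h I \<in> flawsAt F (wlast h)"
  using rule_ok[rule_format, of h I] rule_ok[rule_format, of h "{}"] assms(2)
  by (auto simp: alg2_next_def)

text \<open>On histories the algorithm cannot produce, \<open>I\<close> is arbitrary; \<open>alg2_next\<close> still
  picks a present flaw.\<close>
definition alg2_strategy ::
  "'s set set \<Rightarrow> ('s set \<Rightarrow> 's set \<Rightarrow> bool) \<Rightarrow> ('s set \<Rightarrow> 's \<Rightarrow> 's pmf) \<Rightarrow> 's pmf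
   \<Rightarrow> ('s walk \<Rightarrow> 's set set \<Rightarrow> 's set) \<Rightarrow> 's walk \<Rightarrow> 's set" where
  "alg2_strategy F sim \<rho> \<omega> rule h =
     alg2_next F sim rule h (SOME I. \<exists>k j. alg2_reach F sim \<rho> \<omega> rule h I k j)"

lemma alg2_reach_Nil: "alg2_reach F sim \<rho> \<omega> rule (\<sigma>, []) I k j \<Longrightarrow> I = {} \<and> k = 0 \<and> j = 0"
  by (erule alg2_reach.cases) auto

lemma alg2_reach_unique:
  "alg2_reach F sim \<rho> \<omega> rule h I k j \<Longrightarrow> alg2_reach F sim \<rho> \<omega> rule h I' k' j' \<Longrightarrow>
   I' = I \<and> k' = k \<and> j' = j"
proof (induction arbitrary: I' k' j' rule: alg2_reach.induct)
  case (init \<sigma>)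
  then show ?case
    using alg2_reach_Nil by fastforce
next
  case (cont h I k j f \<sigma>')
  from cont.prems show ?case
  proof (cases rule: alg2_reach.cases)
    case (cont h2 I2 j2)
    then have "h2 = h" by (simp add: prod_eq_iff)
    then show ?thesis using cont cont.IH by fastforce
  next
    case (new h2 I2 k2 j2)
    then have "h2 = h" by (simp add: prod_eq_iff)
    then show ?thesis using new cont.IH cont.hyps by fastforce
  qed auto
next
  case (new h I k j f \<sigma>')
  from new.prems show ?case
  proof (cases rule: alg2_reach.cases)
    case (cont h2 I2 j2)
    then have "h2 = h" by (simp add: prod_eq_iff)
    then show ?thesis using cont new.IH new.hyps by fastforce
  next
    case (new h2 I2 k2 j2)
    then have "h2 = h" by (simp add: prod_eq_iff)
    then show ?thesis using new new.IH by fastforce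
  qed auto
qed

lemma alg2_strategy_eq:
  assumes "alg2_reach F sim \<rho> \<omega> rule h I k j"
  shows "alg2_strategy F sim \<rho> \<omega> rule h = alg2_next F sim rule h I"
proof -
  from assms have "\<exists>I k j. alg2_reach F sim \<rho> \<omega> rule h I k j"
    by blast
  then have "\<exists>k j. alg2_reach F sim \<rho> \<omega> rule h (SOME I. \<exists>k j. alg2_reach F sim \<rho> \<omega> rule h I k j) k j"
    by (rule someI_ex)
  with assms have "(SOME I. \<exists>k j. alg2_reach F sim \<rho> \<omega> rule h I k j) = I"
    using alg2_reach_unique by blast
  then show ?thesis
    by (simp add: alg2_strategy_def)
qed

lemma alg2_reach_snocE:
  assumes "alg2_reach F sim \<rho> \<omega> rule (a, xs @ [(f, \<sigma>')]) I' k' j'"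
  obtains I k j where "alg2_reach F sim \<rho> \<omega> rule (a, xs) I k j"
    and "f = alg2_next F sim rule (a, xs) I" and "k < k' \<or> k = k' \<and> j < j'"
  using assms
proof (cases rule: alg2_reach.cases)
  case (cont h I j)
  then have "h = (a, xs)"
    by (simp add: prod_eq_iff)
  with cont show thesis
    using that[of I k' j] by (simp add: alg2_next_def)
next
  case (new h I k j)
  then have "h = (a, xs)"
    by (simp add: prod_eq_iff)
  with new show thesis
    using that[of I k j] by (auto simp: alg2_next_def)
qed simp

lemma follows_snoc: "follows S (a, xs) \<Longrightarrow> S (a, xs) = f \<Longrightarrow> follows S (a, xs @ [(f, \<sigma>)])"
  by (auto simp: follows_def nth_append less_Suc_eq)

lemma alg2_reach_follows:
  "alg2_reach F sim \<rho> \<omega> rule (a, xs) I k j \<Longrightarrow> follows (alg2_strategy F sim \<rho> \<omega> rule) (a, xs)"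
proof (induction xs arbitrary: I k j rule: rev_induct)
  case Nil
  then show ?case
    by (simp add: follows_def)
next
  case (snoc x xs)
  obtain f \<sigma>' where x: "x = (f, \<sigma>')"
    by fastforce
  from snoc.prems obtain I0 k0 j0 where reach: "alg2_reach F sim \<rho> \<omega> rule (a, xs) I0 k0 j0"
    and "f = alg2_next F sim rule (a, xs) I0"
    unfolding x by (elim alg2_reach_snocE)
  then have "alg2_strategy F sim \<rho> \<omega> rule (a, xs) = f"
    by (simp add: alg2_strategy_eq)
  with snoc.IH[OF reach] show ?case
    unfolding x by (rule follows_snoc)
qed

lemma alg2_reach_strict_prefix:
  assumes "alg2_reach F sim \<rho> \<omega> rule (a, xs) I k j"
    and "alg2_reach F sim \<rho> \<omega> rule (a, xs @ ys) I' k' j'" and "ys \<noteq> []"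
  shows "k < k' \<or> k = k' \<and> j < j'"
  using assms(2,3)
proof (induction ys arbitrary: I' k' j' rule: rev_induct)
  case Nil
  then show ?case
    by simp
next
  case (snoc y ys)
  obtain f \<sigma>' where y: "y = (f, \<sigma>')"
    by fastforce
  from snoc.prems(1) have "alg2_reach F sim \<rho> \<omega> rule (a, (xs @ ys) @ [(f, \<sigma>')]) I' k' j'"
    by (simp add: y)
  then obtain I'' k'' j'' where reach: "alg2_reach F sim \<rho> \<omega> rule (a, xs @ ys) I'' k'' j''"
    and last_step: "k'' < k' \<or> k'' = k' \<and> j'' < j'"
    by (elim alg2_reach_snocE)
  show ?case
  proof (cases "ys = []")
    case True
    with reach have "alg2_reach F sim \<rho> \<omega> rule (a, xs) I'' k'' j''"
      by simp
    with assms(1) have "k'' = k" "j'' = j"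
      using alg2_reach_unique by blast+
    with last_step show ?thesis
      by simp
  next
    case False
    with snoc.IH[OF reach] last_step show ?thesis
      by auto
  qed
qed

lemma valid_BadPar:
  assumes rule_ok: "\<forall>h I. flawsAt F (wlast h) - GamPS F sim I \<noteq> {} \<longrightarrow>
                 rule h I \<in> flawsAt F (wlast h) - GamPS F sim I"
  shows "valid F \<rho> (BadPar F sim \<rho> \<omega> rule s)"
proof -
  have "det_strategy F \<rho> (alg2_strategy F sim \<rho> \<omega> rule)"
    unfolding det_strategy_def alg2_strategy_def using alg2_next_in_flawsAt[OF rule_ok] by blast
  moreover have "follows (alg2_strategy F sim \<rho> \<omega> rule) \<tau>" if "\<tau> \<in> BadPar F sim \<rho> \<omega> rule s" for \<tau>
    using that alg2_reach_follows[of F sim \<rho> \<omega> rule "fst \<tau>" "snd \<tau>"] by (auto simp: BadPar_def)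
  moreover have "\<not> proper_prefix \<tau> \<tau>'"
    if "\<tau> \<in> BadPar F sim \<rho> \<omega> rule s" "\<tau>' \<in> BadPar F sim \<rho> \<omega> rule s" for \<tau> \<tau>'
  proof
    assume "proper_prefix \<tau> \<tau>'"
    then obtain ys where "\<tau>' = (fst \<tau>, snd \<tau> @ ys)" "ys \<noteq> []"
      by (auto simp: proper_prefix_def strict_prefix_def prefix_def prod_eq_iff)
    moreover from that obtain I I' where
      "alg2_reach F sim \<rho> \<omega> rule (fst \<tau>, snd \<tau>) I s 1" "alg2_reach F sim \<rho> \<omega> rule \<tau>' I' s 1"
      by (auto simp: BadPar_def)
    ultimately show False
      using alg2_reach_strict_prefix by fastforce
  qed
  ultimately show ?thesis
    unfolding valid_def by blast
qed

theorem proposition4: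
  fixes F :: "'s::finite set set"
    and sim :: "'s set \<Rightarrow> 's set \<Rightarrow> bool"
    and \<rho> :: "'s set \<Rightarrow> 's \<Rightarrow> 's pmf"
    and \<omega> :: "'s pmf"
    and rule :: "'s walk \<Rightarrow> 's set set \<Rightarrow> 's set"
    and s :: nat
  assumes flaws_nonempty: "\<forall>f\<in>F. f \<noteq> {}"
    and sim_sym: "\<forall>f\<in>F. \<forall>g\<in>F. sim f g \<longrightarrow> sim g f"
    and step: "\<forall>\<sigma> f \<sigma>'. f \<in> flawsAt F \<sigma> \<longrightarrow> \<sigma>' \<in> set_pmf (\<rho> f \<sigma>) \<longrightarrow>
                 flawsAt F \<sigma>' \<subseteq> (flawsAt F \<sigma> - {f}) \<union> Gam F sim f"
    and rule_ok: "\<forall>h I. flawsAt F (wlast h) - GamPS F sim I \<noteq> {} \<longrightarrow>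
                 rule h I \<in> flawsAt F (wlast h) - GamPS F sim I"
    and s_pos: "s \<ge> 1"
  shows "(\<forall>\<tau>\<in>BadPar F sim \<rho> \<omega> rule s. longest_chain sim (word \<tau>) = s)
         \<and> valid F \<rho> (BadPar F sim \<rho> \<omega> rule s)"
  using BadPar_longest_chain[OF step rule_ok s_pos] valid_BadPar[OF rule_ok] by blast

end
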